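(* Let $n\ge 2$, $\delta\in(0,1)$, and let $X_{1},\dots,X_{n}\in[0,1]$ be IID real random variables with common law $F$, $X\sim F$. Then with probability at least $1-\delta$, \[ \bar{X}_{n}-\mathbb{E}_{F}X\le\sqrt{\frac{1}{3n}\log\frac{2}{\delta}}+\sqrt{\frac{2S_{n}^{2}}{3n}\log\frac{2}{\delta}}+\left(\frac{\sqrt{2}}{2}+\frac{\sqrt{42}}{6}\right)\sqrt{\frac{2}{3\lfloor n/2\rfloor n}}\log\frac{2}{\delta}, \] and the same holds (with probability at least $1-\delta$) with $\bar{X}_{n}-\mathbb{E}_{F}X$ replaced by $\mathbb{E}_{F}X-\bar{X}_{n}$.
   Context: $\bar X_n=n^{-1}\sum_{i=1}^n X_i$, $S_{n}^{2}=(n-1)^{-1}\sum_{i=1}^{n}(X_{i}-\bar{X}_{n})^{2}$ is the unbiased sample variance, $\mathbb{E}_F X$ is the mean of $X\sim F$. $\lfloor\cdot\rfloor$ is the floor function. *)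

theory Defs
  imports "HOL-Probability.Probability"
begin

definition sample_mean :: "nat \<Rightarrow> (nat \<Rightarrow> 'a \<Rightarrow> real) \<Rightarrow> 'a \<Rightarrow> real" where
  "sample_mean n X \<omega> = (\<Sum>i<n. X i \<omega>) / real n"

definition sample_var :: "nat \<Rightarrow> (nat \<Rightarrow> 'a \<Rightarrow> real) \<Rightarrow> 'a \<Rightarrow> real" where
  "sample_var n X \<omega> = (\<Sum>i<n. (X i \<omega> - sample_mean n X \<omega>)^2) / (real n - 1)"

definition emp_bernstein_bound :: "nat \<Rightarrow> real \<Rightarrow> real \<Rightarrow> real" where
  "emp_bernstein_bound n \<delta> S2 =
     sqrt (1 / (3 * real n) * ln (2 / \<delta>))
   + sqrt (2 * S2 / (3 * real n) * ln (2 / \<delta>))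
   + (sqrt 2 / 2 + sqrt 42 / 6) * sqrt (2 / (3 * real (n div 2) * real n)) * ln (2 / \<delta>)"

end

theory Submission
  imports Defs
begin

text \<open>
  Let \<open>\<mu> = E X\<close>, \<open>u = sqrt (ln (2/\<delta>) / n)\<close>, let \<open>D\<close> be the deviation of the sample mean from
  \<open>\<mu>\<close> and \<open>\<sigma>\<^sup>2 = (n - 1) S\<^sub>n\<^sup>2 / n \<le> S\<^sub>n\<^sup>2\<close> the biased sample variance. Since \<open>\<lfloor>n/2\<rfloor> \<le> n/2\<close>,
  the empirical Bernstein bound dominates \<open>u/\<surd>3 + \<surd>(2/3) u \<sigma> + 2u\<^sup>2\<close>; each one-sided failure
  event then has probability at most \<open>\<delta>/2\<close>.

  If \<open>u \<ge> 1/5\<close>, already \<open>\<epsilon> = u/\<surd>3 + 2u\<^sup>2\<close> satisfies \<open>2 n \<epsilon>\<^sup>2 \<ge> ln (2/\<delta>)\<close>, and Hoeffding's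
  inequality bounds the probability of \<open>D \<ge> \<epsilon>\<close>.

  If \<open>u < 1/5\<close>, tilt with \<open>\<theta> = 2u\<close> and \<open>\<phi>(y) = \<theta> y - \<theta>\<^sup>2 y\<^sup>2 / (2(1 - \<theta>))\<close>. For \<open>|y| \<le> 1\<close>
  one has \<open>exp \<phi>(y) \<le> 1 + \<theta> y\<close>, so by independence \<open>exp (\<Sum>\<^sub>i \<phi>(X\<^sub>i - \<mu>))\<close> has expectation
  at most \<open>1\<close>, and Markov's inequality bounds the probability that \<open>\<Sum>\<^sub>i \<phi>(X\<^sub>i - \<mu>) \<ge> ln (2/\<delta>)\<close>.
  The sum equals \<open>n (\<theta> D - \<theta>\<^sup>2 (\<sigma>\<^sup>2 + D\<^sup>2) / (2(1 - \<theta>)))\<close>, and an elementary estimate shows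
  that it is at least \<open>n u\<^sup>2 = ln (2/\<delta>)\<close> whenever \<open>D\<close> exceeds the bound.

  The lower deviation follows by applying this to the sample \<open>1 - X\<^sub>i\<close>.
\<close>

lemma ln_add_one_ge:
  fixes x l :: real
  assumes "\<bar>x\<bar> \<le> l" and "l < 1"
  shows "x - x\<^sup>2 / (2 * (1 - l)) \<le> ln (1 + x)"
proof -
  define h where "h t = ln (1 + t) - t + t\<^sup>2 / (2 * (1 - l))" for t
  have h': "DERIV h t :> t * (1 / (1 - l) - 1 / (1 + t))" if "\<bar>t\<bar> \<le> l" for t
  proof -
    have "1 + t > 0" "1 - l > 0" using that assms by linarith+
    then have "DERIV h t :> 1 / (1 + t) - 1 + 2 * t / (2 * (1 - l))"
      unfolding h_def by (auto intro!: derivative_eq_intros simp: power2_eq_square)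
    moreover have "1 / (1 + t) - 1 + 2 * t / (2 * (1 - l)) = t * (1 / (1 - l) - 1 / (1 + t))"
      using \<open>1 + t > 0\<close> \<open>1 - l > 0\<close> by (simp add: divide_simps) (simp add: algebra_simps)
    ultimately show ?thesis by simp
  qed
  \<comment> \<open>\<open>h'\<close> has the sign of \<open>t\<close> because \<open>1 + t \<ge> 1 - l > 0\<close>, so \<open>h\<close> is minimal at \<open>0\<close>.\<close>
  have gap: "1 / (1 + t) \<le> 1 / (1 - l)" if "\<bar>t\<bar> \<le> l" for t
    using that assms by (intro divide_left_mono) auto
  have "h 0 \<le> h x"
  proof (cases "0 \<le> x")
    case True
    show ?thesis
    proof (rule DERIV_nonneg_imp_nondecreasing[OF True])
      fix t assume "0 \<le> t" "t \<le> x"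
      then show "\<exists>y. DERIV h t :> y \<and> 0 \<le> y"
        using h' gap[of t] assms by (intro exI[of _ "t * (1 / (1 - l) - 1 / (1 + t))"]) auto
    qed
  next
    case False
    show ?thesis
    proof (rule DERIV_nonpos_imp_nonincreasing[of x])
      fix t assume "x \<le> t" "t \<le> 0"
      then show "\<exists>y. DERIV h t :> y \<and> y \<le> 0"
        using h' gap[of t] assms False
        by (intro exI[of _ "t * (1 / (1 - l) - 1 / (1 + t))"]) (auto simp: mult_nonpos_nonneg)
    qed (use False in simp)
  qed
  then show ?thesis by (simp add: h_def)
qed

lemma exp_sub_quadratic_le_add_one:
  fixes x l :: real
  assumes "\<bar>x\<bar> \<le> l" and "l < 1"
  shows "exp (x - x\<^sup>2 / (2 * (1 - l))) \<le> 1 + x"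
  using ln_add_one_ge[OF assms] assms by (subst (asm) ln_ge_iff) auto

lemma tilted_exponent_slack_nonneg:
  fixes u s b :: real
  assumes "0 < u" "u < 1/5" "0 \<le> s" "s \<le> 1/2"
    and b: "577/1000 + 816/1000 * s + 2 * u \<le> b" "b \<le> 3/2"
  shows "0 \<le> (2 * b - 1) * (1 - 2 * u) - 2 * s\<^sup>2 - 2 * u\<^sup>2 * b\<^sup>2"
proof -
  have "u\<^sup>2 \<le> u / 5" "s\<^sup>2 \<le> s / 2" "s * u \<le> s / 5"
    using mult_left_mono[of u "1/5" u] mult_left_mono[of s "1/2" s] mult_left_mono[of u "1/5" s] assms
    by (simp_all add: power2_eq_square)
  moreover have "u\<^sup>2 * b\<^sup>2 \<le> 9/4 * u\<^sup>2"
    using assms mult_mono[OF b(2) b(2)] by (simp add: power2_eq_square mult_left_mono)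
  moreover have "(154/1000 + 1632/1000 * s + 4 * u) * (1 - 2 * u) \<le> (2 * b - 1) * (1 - 2 * u)"
    using assms by (intro mult_right_mono) auto
  moreover have "(154/1000 + 1632/1000 * s + 4 * u) * (1 - 2 * u)
      = 154/1000 + 1632/1000 * s + 3692/1000 * u - 3264/1000 * (s * u) - 8 * u\<^sup>2"
    by (simp add: field_simps power2_eq_square)
  ultimately show ?thesis using assms by linarith
qed

lemma tilted_exponent_ge:
  fixes u s D :: real
  assumes u: "0 < u" "u < 1/5" and s: "0 \<le> s" "s \<le> 1/2"
    and D: "u / sqrt 3 + sqrt (2/3) * u * s + 2 * u\<^sup>2 \<le> D" "D \<le> 1"
  shows "u\<^sup>2 \<le> 2 * u * D - (2 * u)\<^sup>2 / (2 * (1 - 2 * u)) * (s\<^sup>2 + D\<^sup>2)"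
proof -
  define g where "g t = 2 * t * (1 - 2 * u) - 2 * u * t\<^sup>2" for t
  define b where "b = 1 / sqrt 3 + sqrt (2/3) * s + 2 * u"
  have "sqrt 3 \<le> 17321/10000" "17320/10000 \<le> sqrt 3"
    by (intro real_le_lsqrt real_le_rsqrt; simp add: power2_eq_square)+
  then have r3: "577/1000 \<le> 1 / sqrt 3" "1 / sqrt 3 \<le> 3/5"
    by (simp_all add: field_simps)
  have r23: "816/1000 \<le> sqrt (2/3)" "sqrt (2/3) \<le> 5/6"
    by (intro real_le_lsqrt real_le_rsqrt; simp add: power2_eq_square)+
  have "816/1000 * s \<le> sqrt (2/3) * s" "sqrt (2/3) * s \<le> 5/6 * s"
    by (rule mult_right_mono[OF r23(1) s(1)], rule mult_right_mono[OF r23(2) s(1)])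
  then have b: "577/1000 + 816/1000 * s + 2 * u \<le> b" "b \<le> 3/2"
    using r3 u s unfolding b_def by linarith+
  have "u * b = u / sqrt 3 + sqrt (2/3) * u * s + 2 * u\<^sup>2"
    unfolding b_def by (simp add: distrib_left power2_eq_square)
  then have ub: "0 \<le> u * b" "u * b \<le> D"
    using u s b D(1) by simp_all
  \<comment> \<open>\<open>g\<close> is increasing on \<open>[0, 1]\<close> because \<open>u < 1/4\<close>.\<close>
  have "g (u * b) \<le> g D"
  proof -
    have "u * (D + u * b) \<le> u * 2"
      using u ub D(2) by (intro mult_left_mono) auto
    then have "0 \<le> 1 - 2 * u - u * (D + u * b)"
      using u by linarith
    then have "0 \<le> 2 * (D - u * b) * (1 - 2 * u - u * (D + u * b))"
      using ub by simp
    also have "\<dots> = g D - g (u * b)"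
      unfolding g_def by (simp add: algebra_simps power2_eq_square)
    finally show ?thesis by simp
  qed
  moreover have "g (u * b) - 2 * u * s\<^sup>2 - u * (1 - 2 * u)
      = u * ((2 * b - 1) * (1 - 2 * u) - 2 * s\<^sup>2 - 2 * u\<^sup>2 * b\<^sup>2)"
    unfolding g_def by (simp add: algebra_simps power2_eq_square)
  moreover have "0 \<le> u * ((2 * b - 1) * (1 - 2 * u) - 2 * s\<^sup>2 - 2 * u\<^sup>2 * b\<^sup>2)"
    using tilted_exponent_slack_nonneg[OF u s b] u by simp
  ultimately have "0 \<le> u / (1 - 2 * u) * (g D - 2 * u * s\<^sup>2 - u * (1 - 2 * u))"
    using u by (intro mult_nonneg_nonneg) auto
  also have "\<dots> = 2 * u * D - (2 * u)\<^sup>2 / (2 * (1 - 2 * u)) * (s\<^sup>2 + D\<^sup>2) - u\<^sup>2"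
    using u unfolding g_def by (simp add: field_simps power2_eq_square)
  finally show ?thesis by simp
qed

lemma hoeffding_exponent_ge:
  fixes u :: real
  assumes "1/5 \<le> u"
  shows "u\<^sup>2 \<le> 2 * (u / sqrt 3 + 2 * u\<^sup>2)\<^sup>2"
proof -
  have "sqrt 3 \<le> 2"
    by (rule real_le_lsqrt) auto
  then have "u / 2 \<le> u / sqrt 3"
    using assms by (intro divide_left_mono) auto
  moreover have "2 * u * (1/5) \<le> 2 * u * u"
    using assms by (intro mult_left_mono) auto
  ultimately have "9/10 * u \<le> u / sqrt 3 + 2 * u\<^sup>2"
    unfolding power2_eq_square by linarith
  then have "(9/10 * u)\<^sup>2 \<le> (u / sqrt 3 + 2 * u\<^sup>2)\<^sup>2"
    using assms by (intro power_mono) auto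
  moreover have "(9/10 * u)\<^sup>2 = 81/100 * u\<^sup>2"
    by (simp add: power2_eq_square)
  ultimately show ?thesis
    using zero_le_power2[of u] by linarith
qed

lemma sqrt3_le_emp_bernstein_constant: "sqrt 3 \<le> sqrt 2 / 2 + sqrt 42 / 6"
proof -
  have "sqrt 3 \<le> 1.7321" "1.41 \<le> sqrt 2" "6.48 \<le> sqrt 42"
    by (intro real_le_lsqrt real_le_rsqrt; simp add: power2_eq_square)+
  then show ?thesis by simp
qed

lemma two_div_le_sqrt_floor_half:
  assumes "n \<ge> 2"
  shows "2 / real n \<le> sqrt 3 * sqrt (2 / (3 * real (n div 2) * real n))"
proof -
  have "1 \<le> n div 2" "2 * (n div 2) \<le> n"
    using assms by auto
  then have m: "1 \<le> real (n div 2)" "2 * real (n div 2) \<le> real n"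
    by simp_all
  have "(2 / real n)\<^sup>2 \<le> 3 * (2 / (3 * real (n div 2) * real n))"
    using m by (simp add: field_simps power2_eq_square)
  then have "2 / real n \<le> sqrt (3 * (2 / (3 * real (n div 2) * real n)))"
    by (rule real_le_rsqrt)
  then show ?thesis
    by (simp only: real_sqrt_mult)
qed

lemma emp_bernstein_bound_ge:
  fixes n :: nat and \<delta> s S2 u :: real
  assumes n: "n \<ge> 2" and "0 < \<delta>" "\<delta> < 1"
    and u: "u = sqrt (ln (2 / \<delta>) / real n)" and s: "0 \<le> s" "s \<le> S2"
  shows "u / sqrt 3 + sqrt (2/3) * u * sqrt s + 2 * u\<^sup>2 \<le> emp_bernstein_bound n \<delta> S2"
proof -
  define L where "L = ln (2 / \<delta>)"
  have L: "0 < L"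
    using assms by (simp add: L_def)
  have uL: "u = sqrt (L / real n)"
    by (simp add: u L_def)
  then have u2: "u\<^sup>2 = L / real n"
    using L by simp
  have "1 / (3 * real n) * L = L / real n / 3"
    by simp
  then have "sqrt (1 / (3 * real n) * L) = u / sqrt 3"
    by (simp only: uL real_sqrt_divide)
  moreover have "sqrt (2/3) * u * sqrt s \<le> sqrt (2 * S2 / (3 * real n) * L)"
  proof -
    have "2 * s / (3 * real n) * L = 2/3 * (L / real n) * s"
      by simp
    then have "sqrt (2/3) * u * sqrt s = sqrt (2 * s / (3 * real n) * L)"
      by (simp only: uL real_sqrt_mult)
    also have "\<dots> \<le> sqrt (2 * S2 / (3 * real n) * L)"
      using s L by (simp add: divide_right_mono mult_right_mono)
    finally show ?thesis .
  qed
  moreover have "2 * u\<^sup>2 \<le> (sqrt 2 / 2 + sqrt 42 / 6) * sqrt (2 / (3 * real (n div 2) * real n)) * L"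
  proof -
    have "2 / real n \<le> (sqrt 2 / 2 + sqrt 42 / 6) * sqrt (2 / (3 * real (n div 2) * real n))"
      using two_div_le_sqrt_floor_half[OF n]
        mult_right_mono[OF sqrt3_le_emp_bernstein_constant, of "sqrt (2 / (3 * real (n div 2) * real n))"]
      by simp
    from mult_right_mono[OF this, of L] show ?thesis
      using L by (simp add: u2)
  qed
  ultimately show ?thesis
    unfolding emp_bernstein_bound_def L_def by linarith
qed

lemma sum_sq_dev_decomp:
  fixes x :: "nat \<Rightarrow> real" and c :: real
  assumes "n > 0"
  defines "m \<equiv> (\<Sum>j<n. x j) / real n"
  shows "(\<Sum>i<n. (x i - c)\<^sup>2) = (\<Sum>i<n. (x i - m)\<^sup>2) + real n * (m - c)\<^sup>2"
proof -
  have "(\<Sum>i<n. (x i - c)\<^sup>2) = (\<Sum>i<n. (x i - m)\<^sup>2 + 2 * (m - c) * (x i - m) + (m - c)\<^sup>2)"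
    by (intro sum.cong) (auto simp: power2_eq_square algebra_simps)
  also have "\<dots> = (\<Sum>i<n. (x i - m)\<^sup>2) + 2 * (m - c) * (\<Sum>i<n. x i - m) + real n * (m - c)\<^sup>2"
    by (simp add: sum.distrib sum_distrib_left)
  also have "(\<Sum>i<n. x i - m) = 0"
    using assms by (simp add: sum_subtractf)
  finally show ?thesis by simp
qed

lemma sum_sq_dev_le_quarter:
  fixes x :: "nat \<Rightarrow> real"
  assumes "n > 0" and x: "\<And>i. i < n \<Longrightarrow> x i \<in> {0..1}"
  defines "m \<equiv> (\<Sum>j<n. x j) / real n"
  shows "(\<Sum>i<n. (x i - m)\<^sup>2) \<le> real n / 4"
proof -
  have "(\<Sum>i<n. (x i - m)\<^sup>2) + real n * m\<^sup>2 = (\<Sum>i<n. (x i)\<^sup>2)"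
    using sum_sq_dev_decomp[OF \<open>n > 0\<close>, of x 0] unfolding m_def by simp
  also have "\<dots> \<le> (\<Sum>i<n. x i)"
    using x by (intro sum_mono) (simp add: power2_eq_square mult_left_le)
  also have "\<dots> = real n * m"
    using assms by simp
  finally have "(\<Sum>i<n. (x i - m)\<^sup>2) \<le> real n * (m - m\<^sup>2)"
    by (simp add: algebra_simps)
  also have "\<dots> \<le> real n * (1/4)"
    using zero_le_power2[of "m - 1/2"] by (intro mult_left_mono) (auto simp: power2_eq_square algebra_simps)
  finally show ?thesis by simp
qed

lemma sum_tilted_eq:
  fixes x :: "nat \<Rightarrow> real"
  assumes "n > 0"
  defines "m \<equiv> (\<Sum>j<n. x j) / real n"
  shows "(\<Sum>i<n. \<theta> * (x i - \<mu>) - a * (x i - \<mu>)\<^sup>2)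
    = real n * (\<theta> * (m - \<mu>) - a * ((\<Sum>i<n. (x i - m)\<^sup>2) / real n + (m - \<mu>)\<^sup>2))"
proof -
  have "(\<Sum>i<n. x i - \<mu>) = real n * (m - \<mu>)"
    using assms by (simp add: sum_subtractf algebra_simps)
  then have "(\<Sum>i<n. \<theta> * (x i - \<mu>) - a * (x i - \<mu>)\<^sup>2)
      = \<theta> * (real n * (m - \<mu>)) - a * (\<Sum>i<n. (x i - \<mu>)\<^sup>2)"
    by (simp add: sum_subtractf flip: sum_distrib_left)
  also have "\<dots> = real n * (\<theta> * (m - \<mu>) - a * ((\<Sum>i<n. (x i - m)\<^sup>2) / real n + (m - \<mu>)\<^sup>2))"
    using assms sum_sq_dev_decomp[OF assms(1), of x \<mu>] by (simp add: field_simps)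
  finally show ?thesis .
qed

lemma sample_mean_le_one:
  assumes "n > 0" and "\<And>i. i < n \<Longrightarrow> X i \<omega> \<in> {0..1}"
  shows "sample_mean n X \<omega> \<le> 1"
proof -
  have "(\<Sum>i<n. X i \<omega>) \<le> (\<Sum>i<n. 1)"
    using assms(2) by (intro sum_mono) auto
  then show ?thesis
    using assms(1) by (simp add: sample_mean_def pos_divide_le_eq)
qed

lemma sample_var_nonneg: "0 \<le> sample_var n X \<omega>"
  unfolding sample_var_def by (cases "n = 0") (auto intro!: divide_nonneg_nonneg sum_nonneg)

lemma sample_mean_reflect:
  assumes "n > 0"
  shows "sample_mean n (\<lambda>i \<omega>. 1 - X i \<omega>) \<omega> = 1 - sample_mean n X \<omega>"
  using assms by (simp add: sample_mean_def sum_subtractf diff_divide_distrib)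

lemma sample_var_reflect:
  assumes "n > 0"
  shows "sample_var n (\<lambda>i \<omega>. 1 - X i \<omega>) \<omega> = sample_var n X \<omega>"
proof -
  have "(1 - X i \<omega> - (1 - sample_mean n X \<omega>))\<^sup>2 = (X i \<omega> - sample_mean n X \<omega>)\<^sup>2" for i
    by (simp add: power2_eq_square algebra_simps)
  then show ?thesis
    by (simp add: sample_var_def sample_mean_reflect[OF assms])
qed

lemma tilted_sum_ge_of_large_deviation:
  fixes X :: "nat \<Rightarrow> 'a \<Rightarrow> real"
  assumes n: "n \<ge> 2" and \<delta>: "0 < \<delta>" "\<delta> < 1"
    and u: "u = sqrt (ln (2 / \<delta>) / real n)" "u < 1/5"
    and X: "\<And>i. i < n \<Longrightarrow> X i \<omega> \<in> {0..1}" and "0 \<le> \<mu>"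
    and dev: "emp_bernstein_bound n \<delta> (sample_var n X \<omega>) < sample_mean n X \<omega> - \<mu>"
  shows "ln (2 / \<delta>) \<le> (\<Sum>i<n. 2 * u * (X i \<omega> - \<mu>) - (2 * u)\<^sup>2 / (2 * (1 - 2 * u)) * (X i \<omega> - \<mu>)\<^sup>2)"
proof -
  define L where "L = ln (2 / \<delta>)"
  define a where "a = (2 * u)\<^sup>2 / (2 * (1 - 2 * u))"
  define D where "D = sample_mean n X \<omega> - \<mu>"
  define SS where "SS = (\<Sum>i<n. (X i \<omega> - sample_mean n X \<omega>)\<^sup>2)"
  have L: "0 < L" and u0: "0 < u" and u2: "u\<^sup>2 = L / real n"
    using n \<delta> by (simp_all add: u L_def)
  have SS: "0 \<le> SS" "SS \<le> real n / 4"
    using sum_sq_dev_le_quarter[of n "\<lambda>i. X i \<omega>"] n X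
    by (auto simp: SS_def sample_mean_def intro: sum_nonneg)
  have "SS / real n \<le> sample_var n X \<omega>"
    using n SS by (simp add: sample_var_def SS_def divide_left_mono)
  then have "u / sqrt 3 + sqrt (2/3) * u * sqrt (SS / real n) + 2 * u\<^sup>2
      \<le> emp_bernstein_bound n \<delta> (sample_var n X \<omega>)"
    using SS n by (intro emp_bernstein_bound_ge[OF n \<delta> u(1)]) auto
  then have "u / sqrt 3 + sqrt (2/3) * u * sqrt (SS / real n) + 2 * u\<^sup>2 \<le> D"
    using dev unfolding D_def by linarith
  moreover have "D \<le> 1"
    using sample_mean_le_one[of n X \<omega>] n X \<open>0 \<le> \<mu>\<close> by (simp add: D_def)
  moreover have "sqrt (SS / real n) \<le> 1/2"
    using SS n by (intro real_le_lsqrt) (auto simp: divide_le_eq power2_eq_square)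
  ultimately have "u\<^sup>2 \<le> 2 * u * D - a * ((sqrt (SS / real n))\<^sup>2 + D\<^sup>2)"
    unfolding a_def using u0 u(2) SS by (intro tilted_exponent_ge) auto
  then have "L / real n \<le> 2 * u * D - a * (SS / real n + D\<^sup>2)"
    using SS n u2 by simp
  then have "L \<le> real n * (2 * u * D - a * (SS / real n + D\<^sup>2))"
    using n by (simp add: pos_divide_le_eq mult.commute)
  also have "\<dots> = (\<Sum>i<n. 2 * u * (X i \<omega> - \<mu>) - a * (X i \<omega> - \<mu>)\<^sup>2)"
    using sum_tilted_eq[where x = "\<lambda>i. X i \<omega>" and \<theta> = "2 * u" and \<mu> = \<mu> and a = a] n
    by (simp add: SS_def D_def sample_mean_def)
  finally show ?thesis
    by (simp add: L_def a_def)
qed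

lemma (in prob_space) nn_integral_exp_tilt_le_one:
  fixes Y :: "'a \<Rightarrow> real"
  assumes [measurable]: "random_variable borel Y"
    and bounded: "\<And>x. x \<in> space M \<Longrightarrow> \<bar>Y x\<bar> \<le> 1" and centered: "expectation Y = 0"
    and "0 < \<theta>" "\<theta> < 1"
  shows "(\<integral>\<^sup>+x. exp (\<theta> * Y x - \<theta>\<^sup>2 / (2 * (1 - \<theta>)) * (Y x)\<^sup>2) \<partial>M) \<le> 1"
proof -
  have small: "\<bar>\<theta> * Y x\<bar> \<le> \<theta>" if "x \<in> space M" for x
    using bounded[OF that] \<open>0 < \<theta>\<close> by (simp add: abs_mult mult_left_le)
  have "(\<integral>\<^sup>+x. exp (\<theta> * Y x - \<theta>\<^sup>2 / (2 * (1 - \<theta>)) * (Y x)\<^sup>2) \<partial>M)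
      \<le> (\<integral>\<^sup>+x. ennreal (1 + \<theta> * Y x) \<partial>M)"
  proof (intro nn_integral_mono ennreal_leI)
    fix x assume "x \<in> space M"
    from exp_sub_quadratic_le_add_one[OF small[OF this] \<open>\<theta> < 1\<close>]
    show "exp (\<theta> * Y x - \<theta>\<^sup>2 / (2 * (1 - \<theta>)) * (Y x)\<^sup>2) \<le> 1 + \<theta> * Y x"
      by (simp add: power_mult_distrib)
  qed
  also have "\<dots> = ennreal (expectation (\<lambda>x. 1 + \<theta> * Y x))"
  proof (rule nn_integral_eq_integral)
    show "integrable M (\<lambda>x. 1 + \<theta> * Y x)"
      using small by (intro integrable_const_bound[where B = "1 + \<theta>"] AE_I2)
        (auto intro: order_trans[OF abs_triangle_ineq])
    show "AE x in M. 0 \<le> 1 + \<theta> * Y x"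
      using small \<open>\<theta> < 1\<close> by (intro AE_I2) (force dest: abs_le_D2)
  qed
  also have "expectation (\<lambda>x. 1 + \<theta> * Y x) = 1"
    using bounded centered prob_space by (simp add: integrable_const_bound[where B = 1])
  finally show ?thesis by simp
qed

lemma (in prob_space) prob_tilted_sum_ge:
  fixes Y :: "'i \<Rightarrow> 'a \<Rightarrow> real"
  assumes "finite I" and indep: "indep_vars (\<lambda>_. borel) Y I"
    and bounded: "\<And>i x. i \<in> I \<Longrightarrow> x \<in> space M \<Longrightarrow> \<bar>Y i x\<bar> \<le> 1"
    and centered: "\<And>i. i \<in> I \<Longrightarrow> expectation (Y i) = 0"
    and "0 < \<theta>" "\<theta> < 1"
  shows "prob {x \<in> space M. L \<le> (\<Sum>i\<in>I. \<theta> * Y i x - \<theta>\<^sup>2 / (2 * (1 - \<theta>)) * (Y i x)\<^sup>2)}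
    \<le> exp (- L)"
proof -
  define \<phi> where "\<phi> y = \<theta> * y - \<theta>\<^sup>2 / (2 * (1 - \<theta>)) * y\<^sup>2" for y
  define Z where "Z x = (\<Sum>i\<in>I. \<phi> (Y i x))" for x
  have [measurable]: "Y i \<in> borel_measurable M" if "i \<in> I" for i
    using indep that unfolding indep_vars_def by blast
  have [measurable]: "\<phi> \<in> borel_measurable borel"
    unfolding \<phi>_def by measurable
  have "(\<integral>\<^sup>+x. ennreal (exp (1 * Z x)) * indicator (space M) x \<partial>M)
      = (\<integral>\<^sup>+x. (\<Prod>i\<in>I. ennreal (exp (\<phi> (Y i x)))) \<partial>M)"
    by (intro nn_integral_cong) (simp add: Z_def exp_sum[OF \<open>finite I\<close>] prod_ennreal)
  also have "\<dots> = (\<Prod>i\<in>I. \<integral>\<^sup>+x. ennreal (exp (\<phi> (Y i x))) \<partial>M)"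
    by (intro indep_vars_nn_integral \<open>finite I\<close> indep_vars_compose2[OF indep]) auto
  also have "\<dots> \<le> (\<Prod>i\<in>I. 1)"
    unfolding \<phi>_def using assms
    by (intro prod_mono_ennreal nn_integral_exp_tilt_le_one) auto
  finally have "ennreal (exp (-1 * L)) * (\<integral>\<^sup>+x. ennreal (exp (1 * Z x)) * indicator (space M) x \<partial>M)
      \<le> ennreal (exp (- L))"
    using mult_left_mono[of _ 1 "ennreal (exp (-1 * L))"] by simp
  with Chernoff_ineq_nn_integral_ge[of 1 "space M" M Z L]
  have "emeasure M {x \<in> space M. L \<le> Z x} \<le> ennreal (exp (- L))"
    by (auto simp: Z_def elim!: order_trans)
  then show ?thesis
    by (simp add: Z_def \<phi>_def emeasure_eq_measure)
qed

lemma measurable_emp_bernstein_bound [measurable]: "emp_bernstein_bound n \<delta> \<in> borel_measurable borel"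
  unfolding emp_bernstein_bound_def[abs_def] by measurable

locale iid_unit_sample = prob_space +
  fixes X :: "nat \<Rightarrow> 'a \<Rightarrow> real" and n :: nat
  assumes measurable_X: "\<And>i. i < n \<Longrightarrow> X i \<in> borel_measurable M"
    and indep_X: "indep_vars (\<lambda>_. borel) X {..<n}"
    and distr_X: "\<And>i. i < n \<Longrightarrow> distr M borel (X i) = distr M borel (X 0)"
    and X_unit: "\<And>i \<omega>. i < n \<Longrightarrow> \<omega> \<in> space M \<Longrightarrow> X i \<omega> \<in> {0..1}"
begin

lemma measurable_X_lessThan [measurable]: "i \<in> {..<n} \<Longrightarrow> X i \<in> borel_measurable M"
  using measurable_X by simp

lemma measurable_sample_mean [measurable]: "sample_mean n X \<in> borel_measurable M"
  unfolding sample_mean_def[abs_def] by measurable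

lemma measurable_sample_var [measurable]: "sample_var n X \<in> borel_measurable M"
  unfolding sample_var_def[abs_def] by measurable

lemma integrable_X: "i < n \<Longrightarrow> integrable M (X i)"
  using measurable_X X_unit by (intro integrable_const_bound[where B = 1] AE_I2) auto

lemma expectation_X_eq: "i < n \<Longrightarrow> expectation (X i) = expectation (X 0)"
proof -
  assume i: "i < n"
  then have "expectation (X i) = (\<integral>x. x \<partial>distr M borel (X i))"
    using measurable_X by (simp add: integral_distr)
  also have "\<dots> = (\<integral>x. x \<partial>distr M borel (X 0))"
    by (simp only: distr_X[OF i])
  also have "\<dots> = expectation (X 0)"
    using i measurable_X by (simp add: integral_distr)
  finally show ?thesis .
qed

lemma expectation_X_unit:
  assumes "n > 0"
  shows "0 \<le> expectation (X 0)" "expectation (X 0) \<le> 1"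
proof -
  show "0 \<le> expectation (X 0)"
    using assms X_unit by (intro integral_nonneg_AE AE_I2) auto
  have "expectation (X 0) \<le> expectation (\<lambda>_. 1)"
    using assms X_unit integrable_X by (intro integral_mono) auto
  then show "expectation (X 0) \<le> 1"
    by (simp add: prob_space)
qed

lemma prob_mean_ge_hoeffding:
  assumes "n > 0" and "0 \<le> \<epsilon>"
  shows "prob {\<omega> \<in> space M. expectation (X 0) + \<epsilon> \<le> sample_mean n X \<omega>}
    \<le> exp (- 2 * real n * \<epsilon>\<^sup>2)"
proof -
  have "iid_interval_bounded_random_variables M {..<n} X (X 0) 0 1"
  proof (intro iid_interval_bounded_random_variables.intro
      iid_interval_bounded_random_variables_axioms.intro)
    show "AE x in M. X 0 x \<in> {0..1}"
      using assms X_unit by (intro AE_I2) auto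
    show "random_variable borel (X 0)"
      using assms measurable_X by simp
    show "distr M borel (X i) = distr M borel (X 0)" if "i \<in> {..<n}" for i
      using that distr_X by blast
  qed (simp_all add: prob_space_axioms indep_X)
  \<comment> \<open>The interpretation makes \<open>expectation (X i) = expectation (X 0)\<close> a simp rule, which loops
    at \<open>i = 0\<close>; hence only \<open>simp only\<close> is used afterwards.\<close>
  then interpret Hoeffding_ineq_iid M "{..<n}" X "X 0" 0 1 "expectation (X 0)"
    by (rule Hoeffding_ineq_iid.intro)
  have "{..<n} \<noteq> {}"
    using assms(1) by blast
  from Hoeffding_ineq_ge'[OF assms(2) zero_less_one this] show ?thesis
    by (simp only: sample_mean_def card_lessThan diff_zero power_one div_by_1)
qed

lemma prob_mean_deviation_gt_emp_bernstein_tilted: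
  assumes n: "n \<ge> 2" and \<delta>: "0 < \<delta>" "\<delta> < 1"
    and small: "sqrt (ln (2 / \<delta>) / real n) < 1/5"
  shows "prob {\<omega> \<in> space M.
    emp_bernstein_bound n \<delta> (sample_var n X \<omega>) < sample_mean n X \<omega> - expectation (X 0)} \<le> \<delta> / 2"
proof -
  define \<mu> where "\<mu> = expectation (X 0)"
  define u where "u = sqrt (ln (2 / \<delta>) / real n)"
  define B where "B = {\<omega> \<in> space M. ln (2 / \<delta>) \<le> (\<Sum>i<n. 2 * u * (X i \<omega> - \<mu>)
    - (2 * u)\<^sup>2 / (2 * (1 - 2 * u)) * (X i \<omega> - \<mu>)\<^sup>2)}"
  have \<mu>: "0 \<le> \<mu>" "\<mu> \<le> 1"
    using expectation_X_unit n by (simp_all add: \<mu>_def)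
  have "prob B \<le> exp (- ln (2 / \<delta>))"
    unfolding B_def
  proof (rule prob_tilted_sum_ge)
    show "indep_vars (\<lambda>_. borel) (\<lambda>i \<omega>. X i \<omega> - \<mu>) {..<n}"
      using indep_vars_compose2[OF indep_X, of "\<lambda>_ x. x - \<mu>" "\<lambda>_. borel"] by simp
    show "\<bar>X i \<omega> - \<mu>\<bar> \<le> 1" if "i \<in> {..<n}" "\<omega> \<in> space M" for i \<omega>
      using X_unit[of i \<omega>] that \<mu> by auto
    show "expectation (\<lambda>\<omega>. X i \<omega> - \<mu>) = 0" if "i \<in> {..<n}" for i
      using that prob_space by (simp add: integrable_X expectation_X_eq[OF that[simplified]] \<mu>_def)
    show "0 < 2 * u" "2 * u < 1"
      using small n \<delta> by (auto simp: u_def)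
  qed simp
  moreover have "{\<omega> \<in> space M.
      emp_bernstein_bound n \<delta> (sample_var n X \<omega>) < sample_mean n X \<omega> - \<mu>} \<subseteq> B"
  proof (rule subsetI, clarify)
    fix \<omega> assume "\<omega> \<in> space M"
      and "emp_bernstein_bound n \<delta> (sample_var n X \<omega>) < sample_mean n X \<omega> - \<mu>"
    with tilted_sum_ge_of_large_deviation[OF n \<delta> u_def small[folded u_def], of X \<omega> \<mu>] X_unit \<mu>
    show "\<omega> \<in> B"
      by (simp add: B_def)
  qed
  moreover have "B \<in> events"
    unfolding B_def by measurable
  ultimately have "prob {\<omega> \<in> space M.
      emp_bernstein_bound n \<delta> (sample_var n X \<omega>) < sample_mean n X \<omega> - \<mu>} \<le> exp (- ln (2 / \<delta>))"
    using finite_measure_mono by (meson order_trans)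
  then show ?thesis
    using \<delta> unfolding \<mu>_def by (simp add: exp_minus)
qed

lemma prob_mean_deviation_gt_emp_bernstein_hoeffding:
  assumes n: "n \<ge> 2" and \<delta>: "0 < \<delta>" "\<delta> < 1"
    and large: "1/5 \<le> sqrt (ln (2 / \<delta>) / real n)"
  shows "prob {\<omega> \<in> space M.
    emp_bernstein_bound n \<delta> (sample_var n X \<omega>) < sample_mean n X \<omega> - expectation (X 0)} \<le> \<delta> / 2"
proof -
  define u where "u = sqrt (ln (2 / \<delta>) / real n)"
  define \<epsilon> where "\<epsilon> = u / sqrt 3 + 2 * u\<^sup>2"
  define B where "B = {\<omega> \<in> space M. expectation (X 0) + \<epsilon> \<le> sample_mean n X \<omega>}"
  have "0 \<le> \<epsilon>"
    using \<delta> by (simp add: \<epsilon>_def u_def)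
  then have "prob B \<le> exp (- 2 * real n * \<epsilon>\<^sup>2)"
    using prob_mean_ge_hoeffding n by (simp add: B_def)
  also have "\<dots> \<le> exp (- ln (2 / \<delta>))"
  proof -
    have "ln (2 / \<delta>) = real n * u\<^sup>2"
      using n \<delta> by (simp add: u_def)
    also have "\<dots> \<le> real n * (2 * \<epsilon>\<^sup>2)"
      using hoeffding_exponent_ge[OF large[folded u_def]] by (simp add: \<epsilon>_def mult_left_mono)
    finally show ?thesis
      by simp
  qed
  also have "\<dots> = \<delta> / 2"
    using \<delta> by (simp add: exp_minus)
  finally have "prob B \<le> \<delta> / 2" .
  moreover have "{\<omega> \<in> space M.
      emp_bernstein_bound n \<delta> (sample_var n X \<omega>) < sample_mean n X \<omega> - expectation (X 0)} \<subseteq> B"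
  proof (rule subsetI, clarify)
    fix \<omega> assume "\<omega> \<in> space M"
      and "emp_bernstein_bound n \<delta> (sample_var n X \<omega>) < sample_mean n X \<omega> - expectation (X 0)"
    moreover have "\<epsilon> \<le> emp_bernstein_bound n \<delta> (sample_var n X \<omega>)"
      using emp_bernstein_bound_ge[OF n \<delta> u_def order.refl sample_var_nonneg] by (simp add: \<epsilon>_def)
    ultimately show "\<omega> \<in> B"
      by (simp add: B_def)
  qed
  moreover have "B \<in> events"
    unfolding B_def by measurable
  ultimately show ?thesis
    using finite_measure_mono by (meson order_trans)
qed

lemma prob_mean_deviation_le_emp_bernstein:
  assumes "n \<ge> 2" and "0 < \<delta>" "\<delta> < 1"
  shows "prob {\<omega> \<in> space M.
    sample_mean n X \<omega> - expectation (X 0) \<le> emp_bernstein_bound n \<delta> (sample_var n X \<omega>)} \<ge> 1 - \<delta> / 2"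
proof -
  let ?G = "{\<omega> \<in> space M.
    sample_mean n X \<omega> - expectation (X 0) \<le> emp_bernstein_bound n \<delta> (sample_var n X \<omega>)}"
  have "space M - ?G = {\<omega> \<in> space M.
    emp_bernstein_bound n \<delta> (sample_var n X \<omega>) < sample_mean n X \<omega> - expectation (X 0)}"
    by auto
  then have "prob (space M - ?G) \<le> \<delta> / 2"
    using prob_mean_deviation_gt_emp_bernstein_tilted[OF assms]
      prob_mean_deviation_gt_emp_bernstein_hoeffding[OF assms]
    by (cases "sqrt (ln (2 / \<delta>) / real n) < 1/5") simp_all
  moreover have "?G \<in> events"
    by measurable
  ultimately show ?thesis
    using prob_compl[of ?G] by simp
qed

lemma iid_unit_sample_reflect: "iid_unit_sample M (\<lambda>i \<omega>. 1 - X i \<omega>) n"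
proof
  show "(\<lambda>\<omega>. 1 - X i \<omega>) \<in> borel_measurable M" if "i < n" for i
    using that measurable_X by simp
  show "indep_vars (\<lambda>_. borel) (\<lambda>i \<omega>. 1 - X i \<omega>) {..<n}"
    using indep_vars_compose2[OF indep_X, of "\<lambda>_ x. 1 - x" "\<lambda>_. borel"] by simp
  show "1 - X i \<omega> \<in> {0..1}" if "i < n" "\<omega> \<in> space M" for i \<omega>
    using X_unit[OF that] by simp
  show "distr M borel (\<lambda>\<omega>. 1 - X i \<omega>) = distr M borel (\<lambda>\<omega>. 1 - X 0 \<omega>)" if i: "i < n" for i
  proof -
    have "distr M borel (\<lambda>\<omega>. 1 - X i \<omega>) = distr (distr M borel (X i)) borel (\<lambda>y. 1 - y)"
      using i measurable_X by (subst distr_distr) (auto simp: comp_def)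
    also have "\<dots> = distr (distr M borel (X 0)) borel (\<lambda>y. 1 - y)"
      by (simp only: distr_X[OF i])
    also have "\<dots> = distr M borel (\<lambda>\<omega>. 1 - X 0 \<omega>)"
      using i measurable_X by (subst distr_distr) (auto simp: comp_def)
    finally show ?thesis .
  qed
qed

lemma prob_neg_deviation_le_emp_bernstein:
  assumes n: "n \<ge> 2" and "0 < \<delta>" "\<delta> < 1"
  shows "prob {\<omega> \<in> space M.
    expectation (X 0) - sample_mean n X \<omega> \<le> emp_bernstein_bound n \<delta> (sample_var n X \<omega>)} \<ge> 1 - \<delta> / 2"
proof -
  interpret reflected: iid_unit_sample M "\<lambda>i \<omega>. 1 - X i \<omega>" n
    by (rule iid_unit_sample_reflect)
  have "expectation (\<lambda>\<omega>. 1 - X 0 \<omega>) = 1 - expectation (X 0)"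
    using n integrable_X[of 0] prob_space by simp
  with reflected.prob_mean_deviation_le_emp_bernstein[OF assms] n show ?thesis
    by (simp add: sample_mean_reflect sample_var_reflect)
qed

end

theorem mainTheorem11:
  fixes M :: "'a measure" and X :: "nat \<Rightarrow> 'a \<Rightarrow> real" and n :: nat and \<delta> :: real
  assumes "prob_space M"
    and "n \<ge> 2"
    and "0 < \<delta>" and "\<delta> < 1"
    and "\<And>i. i < n \<Longrightarrow> X i \<in> borel_measurable M"
    and "prob_space.indep_vars M (\<lambda>_. borel) X {..<n}"
    and "\<And>i. i < n \<Longrightarrow> distr M borel (X i) = distr M borel (X 0)"
    and "\<And>i \<omega>. i < n \<Longrightarrow> \<omega> \<in> space M \<Longrightarrow> X i \<omega> \<in> {0..1}"
  shows "measure M {\<omega> \<in> space M.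
            sample_mean n X \<omega> - prob_space.expectation M (X 0)
              \<le> emp_bernstein_bound n \<delta> (sample_var n X \<omega>)} \<ge> 1 - \<delta>
       \<and> measure M {\<omega> \<in> space M.
            prob_space.expectation M (X 0) - sample_mean n X \<omega>
              \<le> emp_bernstein_bound n \<delta> (sample_var n X \<omega>)} \<ge> 1 - \<delta>"
proof -
  interpret iid_unit_sample M X n
    using assms(1,5-8) unfolding iid_unit_sample_def iid_unit_sample_axioms_def by blast
  show ?thesis
    using prob_mean_deviation_le_emp_bernstein[OF assms(2-4)]
      prob_neg_deviation_le_emp_bernstein[OF assms(2-4)] assms(3) by linarith
qed

end
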